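(* Let $f_1,\dots,f_n:\mathbb{R}^d\to\mathbb{R}$ be such that each $f_i$ is $L_i$-smooth and $f_i^*=\min_xf_i(x)$ exists; let $x_i$ be a stationary point of $f_i$. Let $\alpha\in(0,1)$, $\omega\ge0$, $T_i(x)=\alpha x+(1-\alpha)x_i$, $\tilde f(x)=\frac1n\sum_if_i(T_i(x))$, $\overline{L}=\frac1n\sum_iL_i$, $f^*=\frac1n\sum_if_i^*$. Consider distributed compressed gradient descent on $\tilde f$: $x^{t+1}=x^t-\gamma\frac1n\sum_{i=1}^n\mathcal{C}_i^t(\alpha\nabla f_i(T_i(x^t)))$, with $\mathcal{C}_i^t\in\mathbb{B}^d(\omega)$ drawn independently across $i,t$. Let $\gamma=\gamma_0\frac{1}{\alpha^2}$ with $0<\gamma_0$ such that $\gamma\leq\frac{1}{\overline{L}\alpha^2}$, and let $\Delta_0=\sup_{\alpha'\in(0,1)}(\tilde f_{\alpha'}(x^0)-f^* )$ (assumed finite), where $\tilde f_{\alpha'}$ denotes $\tilde f$ with $\alpha$ replaced by $\alpha'$. Then for all $k\geq1$ \[\min_{0\leq t\leq k-1}\mathbb{E}\|\nabla\tilde f(x^t)\|^2\leq\alpha^2\frac{2\left(1+\frac{2\overline{L}\omega\gamma_0^2\max_iL_i}{n}\right)^k}{\gamma_0k}\Delta_0.\]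
   Context: A (random) operator $\mathcal{C}$ belongs to $\mathbb{B}^d(\omega)$ if $\mathbb{E}[\mathcal{C}(x)] = x$ and $\mathbb{E}\|\mathcal{C}(x)-x\|^2\leq\omega\|x\|^2$ for all $x$. A differentiable $g$ is $L$-smooth if $\|\nabla g(x)-\nabla g(y)\|\leq L\|x-y\|$ for all $x,y$. *)

theory Defs
  imports "HOL-Analysis.Analysis" "HOL-Probability.Probability"
begin

definition gradient :: "(real^'d \<Rightarrow> real) \<Rightarrow> real^'d \<Rightarrow> real^'d" where
  "gradient f x = (THE D. GDERIV f x :> D)"

definition L_smooth :: "real \<Rightarrow> (real^'d \<Rightarrow> real) \<Rightarrow> bool" where
  "L_smooth L g \<longleftrightarrow> (\<forall>x. g differentiable (at x)) \<and>
     (\<forall>x y. norm (gradient g x - gradient g y) \<le> L * norm (x - y))"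

text \<open>Random operator C (sample point s, input x) belongs to B^d(omega) w.r.t. probability space M.\<close>
definition in_B :: "'a measure \<Rightarrow> real \<Rightarrow> ('a \<Rightarrow> real^'d \<Rightarrow> real^'d) \<Rightarrow> bool" where
  "in_B M \<omega> C \<longleftrightarrow> (\<forall>x. integrable M (\<lambda>s. C s x) \<and> integral\<^sup>L M (\<lambda>s. C s x) = x \<and>
     integrable M (\<lambda>s. (norm (C s x - x))\<^sup>2) \<and>
     integral\<^sup>L M (\<lambda>s. (norm (C s x - x))\<^sup>2) \<le> \<omega> * (norm x)\<^sup>2)"

definition Tmap :: "real \<Rightarrow> real^'d \<Rightarrow> real^'d \<Rightarrow> real^'d" where
  "Tmap \<alpha> xi x = \<alpha> *\<^sub>R x + (1 - \<alpha>) *\<^sub>R xi"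

definition ftilde :: "nat \<Rightarrow> (nat \<Rightarrow> real^'d \<Rightarrow> real) \<Rightarrow> (nat \<Rightarrow> real^'d) \<Rightarrow> real \<Rightarrow> real^'d \<Rightarrow> real" where
  "ftilde n f xs \<alpha> x = (1 / real n) * (\<Sum>i<n. f i (Tmap \<alpha> (xs i) x))"

text \<open>DCGD iterates. The compressor C_i^t is Q i t (xi i t s): a jointly measurable
  operator Q i t driven by the random seed xi i t.\<close>
primrec dcgd :: "nat \<Rightarrow> (nat \<Rightarrow> real^'d \<Rightarrow> real) \<Rightarrow> (nat \<Rightarrow> real^'d) \<Rightarrow> real \<Rightarrow> real \<Rightarrow>
    (nat \<Rightarrow> nat \<Rightarrow> 'b \<Rightarrow> real^'d \<Rightarrow> real^'d) \<Rightarrow> (nat \<Rightarrow> nat \<Rightarrow> 'a \<Rightarrow> 'b) \<Rightarrow> real^'d \<Rightarrow>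
    nat \<Rightarrow> 'a \<Rightarrow> real^'d" where
  "dcgd n f xs \<alpha> \<gamma> Q \<xi> x0 0 s = x0"
| "dcgd n f xs \<alpha> \<gamma> Q \<xi> x0 (Suc t) s =
     dcgd n f xs \<alpha> \<gamma> Q \<xi> x0 t s - \<gamma> *\<^sub>R ((1 / real n) *\<^sub>R
       (\<Sum>i<n. Q i t (\<xi> i t s) (\<alpha> *\<^sub>R gradient (f i) (Tmap \<alpha> (xs i) (dcgd n f xs \<alpha> \<gamma> Q \<xi> x0 t s)))))"

end

theory Submission
  imports Defs
begin

(* Write F for the shifted objective ftilde. It is (alpha^2 Lbar)-smooth and bounded below by
   f_star, and the averaged compressed gradient is an unbiased estimate of grad F whose variance,
   by the independence of the compressors, is at most omega/n^2 times the sum of the squared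
   local gradients; since each f_i is bounded below and L_i-smooth, this is at most
   2 alpha^2 omega Lmax (F - f_star) / n. Conditioning on the past seeds, the descent lemma gives
     E[F(x_(t+1))] - f_star <= (1 + kappa) (E[F(x_t)] - f_star) - gamma/2 E|grad F(x_t)|^2
   with kappa = Lbar gamma0^2 omega Lmax / n. Dividing by (1 + kappa)^(t+1) and telescoping
   bounds the smallest of the k expected squared gradient norms. *)

lemma gderiv_unique:
  assumes "GDERIV f x :> D" and "GDERIV f x :> D'"
  shows "D = D'"
proof -
  have "(\<lambda>h. h \<bullet> D) = (\<lambda>h. h \<bullet> D')"
    using assms unfolding gderiv_def by (rule has_derivative_unique)
  then show ?thesis
    by (metis vector_eq_ldot)
qed

lemma gradient_eqI:
  fixes f :: "real^'d \<Rightarrow> real"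
  assumes "GDERIV f x :> D"
  shows "gradient f x = D"
  unfolding gradient_def using assms gderiv_unique by blast

lemma differentiable_imp_gderiv:
  fixes f :: "real^'d \<Rightarrow> real"
  assumes "f differentiable (at x)"
  shows "GDERIV f x :> gradient f x"
proof -
  obtain D where D: "(f has_derivative D) (at x)"
    using assms unfolding differentiable_def by blast
  have "D = (\<lambda>h. h \<bullet> adjoint D 1)"
    using adjoint_works[OF has_derivative_linear[OF D]] by (simp add: fun_eq_iff)
  then have "GDERIV f x :> adjoint D 1"
    using D unfolding gderiv_def by simp
  then show ?thesis
    using gradient_eqI by metis
qed

lemma L_smooth_gderiv:
  "L_smooth L g \<Longrightarrow> GDERIV g x :> gradient g x"
  unfolding L_smooth_def by (blast intro: differentiable_imp_gderiv)

lemma L_smooth_nonneg: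
  fixes g :: "real^'d \<Rightarrow> real"
  assumes "L_smooth L g"
  shows "L \<ge> 0"
proof -
  obtain b :: "real^'d" where "b \<in> Basis"
    using nonempty_Basis by blast
  then have "norm b > 0"
    by auto
  moreover have "0 \<le> L * norm (b - 0)"
    using assms unfolding L_smooth_def by (meson norm_ge_zero order_trans)
  ultimately show ?thesis
    by (simp add: zero_le_mult_iff)
qed

lemma L_smooth_borel_measurable:
  assumes "L_smooth L (g :: real^'d \<Rightarrow> real)"
  shows "g \<in> borel_measurable borel" and "gradient g \<in> borel_measurable borel"
proof -
  show "g \<in> borel_measurable borel"
    using assms unfolding L_smooth_def
    by (intro borel_measurable_continuous_onI differentiable_imp_continuous_on)
      (auto simp: differentiable_on_def)
  have "L-lipschitz_on UNIV (gradient g)"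
    using assms L_smooth_nonneg[OF assms] unfolding L_smooth_def
    by (intro lipschitz_onI) (auto simp: dist_norm)
  then show "gradient g \<in> borel_measurable borel"
    by (intro borel_measurable_continuous_onI lipschitz_on_continuous_on)
qed

lemma L_smooth_descent:
  fixes g :: "real^'d \<Rightarrow> real"
  assumes "L_smooth L g"
  shows "g y \<le> g x + (y - x) \<bullet> gradient g x + L / 2 * (norm (y - x))\<^sup>2"
proof -
  define h where "h = y - x"
  define \<phi> where "\<phi> t = g (x + t *\<^sub>R h) - t * (h \<bullet> gradient g x) - L / 2 * t\<^sup>2 * (norm h)\<^sup>2" for t
  have der: "(\<phi> has_real_derivative
      h \<bullet> gradient g (x + t *\<^sub>R h) - h \<bullet> gradient g x - L * t * (norm h)\<^sup>2) (at t)" for t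
  proof -
    have "((\<lambda>t. x + t *\<^sub>R h) has_derivative (\<lambda>s. s *\<^sub>R h)) (at t)"
      by (auto intro!: derivative_eq_intros)
    from has_derivative_compose[OF this L_smooth_gderiv[OF assms, unfolded gderiv_def]]
    have "((\<lambda>t. g (x + t *\<^sub>R h)) has_derivative (\<lambda>s. (s *\<^sub>R h) \<bullet> gradient g (x + t *\<^sub>R h))) (at t)"
      by (simp add: o_def)
    then show ?thesis
      unfolding \<phi>_def has_field_derivative_def
      by (auto intro!: derivative_eq_intros simp: algebra_simps power2_eq_square)
  qed
  have slope: "h \<bullet> gradient g (x + t *\<^sub>R h) - h \<bullet> gradient g x \<le> L * t * (norm h)\<^sup>2"
    if "0 \<le> t" for t
  proof -
    have "h \<bullet> gradient g (x + t *\<^sub>R h) - h \<bullet> gradient g x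
        \<le> norm h * norm (gradient g (x + t *\<^sub>R h) - gradient g x)"
      by (metis inner_diff_right norm_cauchy_schwarz)
    also have "\<dots> \<le> norm h * (L * norm (t *\<^sub>R h))"
      using assms unfolding L_smooth_def by (metis add_diff_cancel_left' mult_left_mono norm_ge_zero)
    finally show ?thesis
      using that by (simp add: power2_eq_square algebra_simps)
  qed
  have "\<phi> 1 \<le> \<phi> 0"
    by (intro DERIV_nonpos_imp_nonincreasing[of 0 1]) (simp, metis der slope diff_le_0_iff_le)
  then show ?thesis
    unfolding \<phi>_def h_def by (simp add: algebra_simps)
qed

lemma L_smooth_norm_gradient_le:
  fixes g :: "real^'d \<Rightarrow> real"
  assumes smooth: "L_smooth L g" and lower: "\<And>z. m \<le> g z"
  shows "(norm (gradient g y))\<^sup>2 \<le> 2 * L * (g y - m)"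
proof -
  define q where "q = (norm (gradient g y))\<^sup>2"
  have step: "m \<le> g y - s * q + L / 2 * s\<^sup>2 * q" for s
  proof -
    have "m \<le> g (y - s *\<^sub>R gradient g y)"
      by (rule lower)
    also have "\<dots> \<le> g y - s * q + L / 2 * s\<^sup>2 * q"
      using L_smooth_descent[OF smooth, of "y - s *\<^sub>R gradient g y" y]
      by (simp add: q_def power2_norm_eq_inner power_mult_distrib)
    finally show ?thesis .
  qed
  show ?thesis
  proof (cases "L = 0")
    case True
    \<comment> \<open>then g is unbounded below along the negative gradient unless the gradient vanishes\<close>
    have "q = 0"
    proof (rule ccontr)
      assume "q \<noteq> 0"
      then show False
        using step[of "(g y - m + 1) / q"] True by simp
    qed
    then show ?thesis
      using True by (simp add: q_def)
  next
    case False
    then have "L > 0"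
      using L_smooth_nonneg[OF smooth] by simp
    have "m \<le> g y - q / (2 * L)"
      using step[of "1 / L"] \<open>L > 0\<close> by (simp add: field_simps power2_eq_square)
    then show ?thesis
      using \<open>L > 0\<close> by (simp add: q_def field_simps)
  qed
qed

lemma gderiv_ftilde:
  fixes f :: "nat \<Rightarrow> real^'d \<Rightarrow> real"
  assumes "\<forall>i<n. L_smooth (L i) (f i)"
  shows "GDERIV (ftilde n f xs \<alpha>) x :>
    (1 / real n) *\<^sub>R (\<Sum>i<n. \<alpha> *\<^sub>R gradient (f i) (Tmap \<alpha> (xs i) x))"
proof -
  have "((\<lambda>x. f i (Tmap \<alpha> (xs i) x)) has_derivative
      (\<lambda>h. h \<bullet> (\<alpha> *\<^sub>R gradient (f i) (Tmap \<alpha> (xs i) x)))) (at x)" if "i < n" for i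
  proof -
    have Tmap: "(Tmap \<alpha> (xs i) has_derivative (\<lambda>h. \<alpha> *\<^sub>R h)) (at x)"
      unfolding Tmap_def by (auto intro!: derivative_eq_intros)
    have "L_smooth (L i) (f i)"
      using assms that by blast
    from has_derivative_compose[OF Tmap L_smooth_gderiv[OF this, unfolded gderiv_def]]
    show ?thesis
      by (simp add: o_def)
  qed
  then have "((\<lambda>x. (1 / real n) * (\<Sum>i<n. f i (Tmap \<alpha> (xs i) x))) has_derivative
      (\<lambda>h. (1 / real n) * (\<Sum>i<n. h \<bullet> (\<alpha> *\<^sub>R gradient (f i) (Tmap \<alpha> (xs i) x))))) (at x)"
    by (intro has_derivative_mult_right has_derivative_sum) auto
  then show ?thesis
    unfolding gderiv_def ftilde_def[abs_def] by (simp add: inner_sum_right)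
qed

lemma gradient_ftilde:
  fixes f :: "nat \<Rightarrow> real^'d \<Rightarrow> real"
  assumes "\<forall>i<n. L_smooth (L i) (f i)"
  shows "gradient (ftilde n f xs \<alpha>) x =
    (1 / real n) *\<^sub>R (\<Sum>i<n. \<alpha> *\<^sub>R gradient (f i) (Tmap \<alpha> (xs i) x))"
  using gderiv_ftilde[OF assms] by (rule gradient_eqI)

lemma L_smooth_ftilde:
  fixes f :: "nat \<Rightarrow> real^'d \<Rightarrow> real"
  assumes smooth: "\<forall>i<n. L_smooth (L i) (f i)" and "\<alpha> \<ge> 0"
  shows "L_smooth (\<alpha>\<^sup>2 * ((1 / real n) * (\<Sum>i<n. L i))) (ftilde n f xs \<alpha>)"
  unfolding L_smooth_def
proof safe
  show "ftilde n f xs \<alpha> differentiable at x" for x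
    using gderiv_ftilde[OF smooth] unfolding gderiv_def differentiable_def by blast
next
  fix x y :: "real^'d"
  let ?d = "\<lambda>i. gradient (f i) (Tmap \<alpha> (xs i) x) - gradient (f i) (Tmap \<alpha> (xs i) y)"
  have d_le: "norm (?d i) \<le> L i * (\<alpha> * norm (x - y))" if "i < n" for i
  proof -
    have "Tmap \<alpha> (xs i) x - Tmap \<alpha> (xs i) y = \<alpha> *\<^sub>R (x - y)"
      by (simp add: Tmap_def algebra_simps)
    then show ?thesis
      using smooth that \<open>\<alpha> \<ge> 0\<close> unfolding L_smooth_def by (metis abs_of_nonneg norm_scaleR)
  qed
  have "gradient (ftilde n f xs \<alpha>) x - gradient (ftilde n f xs \<alpha>) y
      = (1 / real n) *\<^sub>R (\<Sum>i<n. \<alpha> *\<^sub>R ?d i)"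
    unfolding gradient_ftilde[OF smooth] by (simp add: sum_subtractf scaleR_diff_right)
  also have "norm \<dots> = (1 / real n) * norm (\<Sum>i<n. \<alpha> *\<^sub>R ?d i)"
    by simp
  also have "\<dots> \<le> (1 / real n) * (\<Sum>i<n. norm (\<alpha> *\<^sub>R ?d i))"
    by (intro mult_left_mono norm_sum) simp
  also have "\<dots> \<le> (1 / real n) * (\<Sum>i<n. \<alpha> * (L i * (\<alpha> * norm (x - y))))"
    using \<open>\<alpha> \<ge> 0\<close> d_le by (intro mult_left_mono sum_mono) (auto simp: mult_left_mono)
  also have "\<dots> = \<alpha>\<^sup>2 * ((1 / real n) * (\<Sum>i<n. L i)) * norm (x - y)"
    by (simp add: sum_distrib_left sum_distrib_right sum_divide_distrib power2_eq_square algebra_simps)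
  finally show "norm (gradient (ftilde n f xs \<alpha>) x - gradient (ftilde n f xs \<alpha>) y)
      \<le> \<alpha>\<^sup>2 * ((1 / real n) * (\<Sum>i<n. L i)) * norm (x - y)" .
qed

lemma Min_le_of_descent_recurrence:
  fixes e g :: "nat \<Rightarrow> real" and R \<gamma> :: real
  assumes "R \<ge> 1" and "\<gamma> > 0" and "k \<ge> 1"
    and e_nonneg: "\<And>t. e t \<ge> 0" and g_nonneg: "\<And>t. g t \<ge> 0"
    and recurrence: "\<And>t. e (Suc t) \<le> R * e t - \<gamma> / 2 * g t"
  shows "(MIN t\<in>{0..k-1}. g t) \<le> 2 * R ^ k * e 0 / (\<gamma> * real k)"
proof -
  have "R > 0"
    using \<open>R \<ge> 1\<close> by simp
  have telescope: "\<gamma> / 2 * (\<Sum>t<m. g t / R ^ Suc t) \<le> e 0 - e m / R ^ m" for m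
  proof (induction m)
    case (Suc m)
    have "e (Suc m) / R ^ Suc m \<le> e m / R ^ m - \<gamma> / 2 * (g m / R ^ Suc m)"
      using divide_right_mono[OF recurrence[of m], of "R ^ Suc m"] \<open>R > 0\<close>
      by (simp add: field_simps)
    with Suc.IH show ?case
      by (simp add: algebra_simps)
  qed simp
  define \<mu> where "\<mu> = (MIN t\<in>{0..k-1}. g t)"
  have "\<mu> \<ge> 0"
    unfolding \<mu>_def using \<open>k \<ge> 1\<close> g_nonneg by (subst Min_ge_iff) auto
  have "\<mu> / R ^ k \<le> g t / R ^ Suc t" if "t < k" for t
  proof -
    have "\<mu> \<le> g t"
      unfolding \<mu>_def using that by (intro Min_le) auto
    moreover have "R ^ Suc t \<le> R ^ k"
      using \<open>R \<ge> 1\<close> that by (intro power_increasing) auto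
    ultimately show ?thesis
      using \<open>\<mu> \<ge> 0\<close> \<open>R > 0\<close> g_nonneg[of t] by (intro frac_le) auto
  qed
  then have "real k * (\<mu> / R ^ k) \<le> (\<Sum>t<k. g t / R ^ Suc t)"
    using sum_mono[of "{..<k}" "\<lambda>_. \<mu> / R ^ k"] by simp
  also have "\<dots> \<le> 2 / \<gamma> * e 0"
  proof -
    have "e k / R ^ k \<ge> 0"
      using e_nonneg[of k] \<open>R > 0\<close> by simp
    then have "\<gamma> / 2 * (\<Sum>t<k. g t / R ^ Suc t) \<le> e 0"
      using telescope[of k] by linarith
    then show ?thesis
      using \<open>\<gamma> > 0\<close> by (simp add: field_simps)
  qed
  finally show ?thesis
    using \<open>R > 0\<close> \<open>\<gamma> > 0\<close> \<open>k \<ge> 1\<close> unfolding \<mu>_def by (simp add: field_simps)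
qed

lemma nn_integral_le_imp_integral_le:
  fixes f g :: "'a \<Rightarrow> real"
  assumes f: "f \<in> borel_measurable M" "\<And>x. 0 \<le> f x"
    and g: "integrable M g" "\<And>x. 0 \<le> g x"
    and le: "(\<integral>\<^sup>+x. f x \<partial>M) \<le> (\<integral>\<^sup>+x. g x \<partial>M)"
  shows "integrable M f" and "(\<integral>x. f x \<partial>M) \<le> (\<integral>x. g x \<partial>M)"
proof -
  have g_eq: "(\<integral>\<^sup>+x. g x \<partial>M) = (\<integral>x. g x \<partial>M)"
    using g by (intro nn_integral_eq_integral) auto
  have "(\<integral>\<^sup>+x. f x \<partial>M) < \<infinity>"
    using le_less_trans[OF le[unfolded g_eq] ennreal_less_top] by simp
  then show int_f: "integrable M f"
    using f by (intro integrableI_nonneg) auto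
  have "ennreal (\<integral>x. f x \<partial>M) \<le> ennreal (\<integral>x. g x \<partial>M)"
    using le g_eq nn_integral_eq_integral[OF int_f] f(2) by simp
  then show "(\<integral>x. f x \<partial>M) \<le> (\<integral>x. g x \<partial>M)"
    using g by (simp add: ennreal_le_iff integral_nonneg)
qed

context prob_space
begin

lemma indep_var_inner:
  fixes X Y :: "'a \<Rightarrow> 'v::euclidean_space"
  assumes indep: "indep_var borel X borel Y" and X: "integrable M X" and Y: "integrable M Y"
  shows "integrable M (\<lambda>s. X s \<bullet> Y s)"
    and "(\<integral>s. X s \<bullet> Y s \<partial>M) = (\<integral>s. X s \<partial>M) \<bullet> (\<integral>s. Y s \<partial>M)"
proof -
  have coord_indep: "indep_var borel (\<lambda>s. X s \<bullet> b) borel (\<lambda>s. Y s \<bullet> b)" for b :: 'v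
    using indep_var_compose[OF indep, of "\<lambda>v. v \<bullet> b" borel "\<lambda>v. v \<bullet> b" borel]
    by (simp add: o_def)
  have coord_int: "integrable M (\<lambda>s. X s \<bullet> b)" "integrable M (\<lambda>s. Y s \<bullet> b)" for b :: 'v
    using X Y by auto
  have inner_coords: "X s \<bullet> Y s = (\<Sum>b\<in>Basis. (X s \<bullet> b) * (Y s \<bullet> b))" for s
    by (rule euclidean_inner)
  show "integrable M (\<lambda>s. X s \<bullet> Y s)"
    unfolding inner_coords
    using indep_var_integrable[OF coord_indep coord_int] by (intro Bochner_Integration.integrable_sum)
  have "(\<integral>s. X s \<bullet> Y s \<partial>M) = (\<Sum>b\<in>Basis. (\<integral>s. X s \<bullet> b \<partial>M) * (\<integral>s. Y s \<bullet> b \<partial>M))"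
    unfolding inner_coords
    using indep_var_integrable[OF coord_indep coord_int]
      indep_var_lebesgue_integral[OF coord_indep coord_int]
    by (simp add: Bochner_Integration.integral_sum)
  also have "\<dots> = (\<integral>s. X s \<partial>M) \<bullet> (\<integral>s. Y s \<partial>M)"
    using X Y by (simp add: euclidean_inner[symmetric])
  finally show "(\<integral>s. X s \<bullet> Y s \<partial>M) = (\<integral>s. X s \<partial>M) \<bullet> (\<integral>s. Y s \<partial>M)" .
qed

lemma integral_norm_sum_indep_zero_mean:
  fixes D :: "'i \<Rightarrow> 'a \<Rightarrow> 'v::euclidean_space"
  assumes "finite I"
    and indep: "\<And>i j. i \<in> I \<Longrightarrow> j \<in> I \<Longrightarrow> i \<noteq> j \<Longrightarrow> indep_var borel (D i) borel (D j)"
    and int: "\<And>i. i \<in> I \<Longrightarrow> integrable M (D i)"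
    and mean: "\<And>i. i \<in> I \<Longrightarrow> (\<integral>s. D i s \<partial>M) = 0"
    and int_sq: "\<And>i. i \<in> I \<Longrightarrow> integrable M (\<lambda>s. (norm (D i s))\<^sup>2)"
  shows "integrable M (\<lambda>s. (norm (\<Sum>i\<in>I. D i s))\<^sup>2)"
    and "(\<integral>s. (norm (\<Sum>i\<in>I. D i s))\<^sup>2 \<partial>M) = (\<Sum>i\<in>I. \<integral>s. (norm (D i s))\<^sup>2 \<partial>M)"
proof -
  have expand: "(norm (\<Sum>i\<in>I. D i s))\<^sup>2 = (\<Sum>i\<in>I. \<Sum>j\<in>I. D i s \<bullet> D j s)" for s
    by (simp add: power2_norm_eq_inner inner_sum_left inner_sum_right) (rule sum.swap)
  have cross_int: "integrable M (\<lambda>s. D i s \<bullet> D j s)" if "i \<in> I" "j \<in> I" for i j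
    using indep_var_inner(1)[OF indep int int] int_sq that
    by (cases "i = j") (auto simp: power2_norm_eq_inner)
  have cross_integral:
    "(\<integral>s. D i s \<bullet> D j s \<partial>M) = (if i = j then \<integral>s. (norm (D i s))\<^sup>2 \<partial>M else 0)"
    if "i \<in> I" "j \<in> I" for i j
  proof (cases "i = j")
    case False
    then show ?thesis
      using indep_var_inner(2)[OF indep[OF that False] int[OF that(1)] int[OF that(2)]] mean that
      by simp
  qed (simp add: power2_norm_eq_inner)
  show "integrable M (\<lambda>s. (norm (\<Sum>i\<in>I. D i s))\<^sup>2)"
    unfolding expand using cross_int by (intro Bochner_Integration.integrable_sum) auto
  have "(\<integral>s. (norm (\<Sum>i\<in>I. D i s))\<^sup>2 \<partial>M) = (\<Sum>i\<in>I. \<Sum>j\<in>I. \<integral>s. D i s \<bullet> D j s \<partial>M)"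
    unfolding expand using cross_int by (simp add: Bochner_Integration.integral_sum Bochner_Integration.integrable_sum)
  also have "\<dots> = (\<Sum>i\<in>I. \<Sum>j\<in>I. if i = j then \<integral>s. (norm (D i s))\<^sup>2 \<partial>M else 0)"
    using cross_integral by (intro sum.cong refl) auto
  also have "\<dots> = (\<Sum>i\<in>I. \<integral>s. (norm (D i s))\<^sup>2 \<partial>M)"
    using \<open>finite I\<close> by (simp add: sum.delta')
  finally show "(\<integral>s. (norm (\<Sum>i\<in>I. D i s))\<^sup>2 \<partial>M) = (\<Sum>i\<in>I. \<integral>s. (norm (D i s))\<^sup>2 \<partial>M)" .
qed

lemma in_B_average:
  fixes C :: "nat \<Rightarrow> 'a \<Rightarrow> real^'d \<Rightarrow> real^'d" and u :: "nat \<Rightarrow> real^'d"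
  assumes compress: "\<And>i. i < n \<Longrightarrow> in_B M \<omega> (C i)"
    and indep: "\<And>i j. i < n \<Longrightarrow> j < n \<Longrightarrow> i \<noteq> j \<Longrightarrow>
      indep_var borel (\<lambda>s. C i s (u i)) borel (\<lambda>s. C j s (u j))"
  shows "integrable M (\<lambda>s. (1 / real n) *\<^sub>R (\<Sum>i<n. C i s (u i)))"
    and "(\<integral>s. (1 / real n) *\<^sub>R (\<Sum>i<n. C i s (u i)) \<partial>M) = (1 / real n) *\<^sub>R (\<Sum>i<n. u i)"
    and "integrable M (\<lambda>s. (norm ((1 / real n) *\<^sub>R (\<Sum>i<n. C i s (u i))))\<^sup>2)"
    and "(\<integral>s. (norm ((1 / real n) *\<^sub>R (\<Sum>i<n. C i s (u i))))\<^sup>2 \<partial>M)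
      \<le> (norm ((1 / real n) *\<^sub>R (\<Sum>i<n. u i)))\<^sup>2 + \<omega> / (real n)\<^sup>2 * (\<Sum>i<n. (norm (u i))\<^sup>2)"
proof -
  define D where "D i s = C i s (u i) - u i" for i s
  define w where "w = (1 / real n) *\<^sub>R (\<Sum>i<n. u i)"
  define Z where "Z s = (1 / real n) *\<^sub>R (\<Sum>i<n. D i s)" for s
  have C: "integrable M (\<lambda>s. C i s (u i))" "(\<integral>s. C i s (u i) \<partial>M) = u i"
    "integrable M (\<lambda>s. (norm (D i s))\<^sup>2)" "(\<integral>s. (norm (D i s))\<^sup>2 \<partial>M) \<le> \<omega> * (norm (u i))\<^sup>2"
    if "i < n" for i
    using compress[OF that] unfolding in_B_def D_def by blast+
  have D: "integrable M (D i)" "(\<integral>s. D i s \<partial>M) = 0" if "i < n" for i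
    using C[OF that] unfolding D_def by (auto simp: prob_space)
  have D_indep: "indep_var borel (D i) borel (D j)" if "i < n" "j < n" "i \<noteq> j" for i j
    using indep_var_compose[OF indep[OF that], of "\<lambda>v. v - u i" borel "\<lambda>v. v - u j" borel]
    by (simp add: o_def D_def[abs_def])
  have sum_D: "integrable M (\<lambda>s. (norm (\<Sum>i<n. D i s))\<^sup>2)"
    "(\<integral>s. (norm (\<Sum>i<n. D i s))\<^sup>2 \<partial>M) = (\<Sum>i<n. \<integral>s. (norm (D i s))\<^sup>2 \<partial>M)"
    using integral_norm_sum_indep_zero_mean[of "{..<n}" D] D_indep D C(3) by auto
  have Z: "integrable M Z" "(\<integral>s. Z s \<partial>M) = 0"
    unfolding Z_def using D
    by (auto intro!: Bochner_Integration.integrable_sum simp: Bochner_Integration.integral_sum)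
  have avg_eq: "(1 / real n) *\<^sub>R (\<Sum>i<n. C i s (u i)) = w + Z s" for s
    unfolding w_def Z_def D_def by (simp add: sum_subtractf scaleR_diff_right)
  have norm_avg: "(norm (w + Z s))\<^sup>2 = (norm w)\<^sup>2 + 2 * (w \<bullet> Z s)
      + (1 / real n)\<^sup>2 * (norm (\<Sum>i<n. D i s))\<^sup>2" for s
  proof -
    have "(norm (w + Z s))\<^sup>2 = (norm w)\<^sup>2 + 2 * (w \<bullet> Z s) + (norm (Z s))\<^sup>2"
      unfolding power2_norm_eq_inner
      by (simp add: inner_add_left inner_add_right inner_commute[of "Z s" w])
    moreover have "(norm (Z s))\<^sup>2 = (1 / real n)\<^sup>2 * (norm (\<Sum>i<n. D i s))\<^sup>2"
      unfolding Z_def by (simp only: norm_scaleR power_mult_distrib power2_abs)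
    ultimately show ?thesis
      by simp
  qed
  show "integrable M (\<lambda>s. (1 / real n) *\<^sub>R (\<Sum>i<n. C i s (u i)))"
    using C(1) by (intro integrable_scaleR_right Bochner_Integration.integrable_sum) auto
  show "(\<integral>s. (1 / real n) *\<^sub>R (\<Sum>i<n. C i s (u i)) \<partial>M) = (1 / real n) *\<^sub>R (\<Sum>i<n. u i)"
    using C(1,2) by (simp add: Bochner_Integration.integral_sum)
  have wZ: "integrable M (\<lambda>s. w \<bullet> Z s)" "(\<integral>s. w \<bullet> Z s \<partial>M) = 0"
    using Z by simp_all
  show "integrable M (\<lambda>s. (norm ((1 / real n) *\<^sub>R (\<Sum>i<n. C i s (u i))))\<^sup>2)"
    unfolding avg_eq norm_avg using wZ(1) sum_D(1)
    by (intro Bochner_Integration.integrable_add integrable_mult_right integrable_const)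
  have "(\<integral>s. (norm ((1 / real n) *\<^sub>R (\<Sum>i<n. C i s (u i))))\<^sup>2 \<partial>M)
      = (norm w)\<^sup>2 + (1 / real n)\<^sup>2 * (\<Sum>i<n. \<integral>s. (norm (D i s))\<^sup>2 \<partial>M)"
    unfolding avg_eq norm_avg using wZ sum_D
    by (simp add: Bochner_Integration.integral_add prob_space)
  also have "\<dots> \<le> (norm w)\<^sup>2 + (1 / real n)\<^sup>2 * (\<Sum>i<n. \<omega> * (norm (u i))\<^sup>2)"
    using C(4) by (intro add_left_mono mult_left_mono sum_mono) auto
  also have "\<dots> = (norm w)\<^sup>2 + \<omega> / (real n)\<^sup>2 * (\<Sum>i<n. (norm (u i))\<^sup>2)"
    by (simp add: sum_distrib_left power_divide)
  finally show "(\<integral>s. (norm ((1 / real n) *\<^sub>R (\<Sum>i<n. C i s (u i))))\<^sup>2 \<partial>M)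
      \<le> (norm ((1 / real n) *\<^sub>R (\<Sum>i<n. u i)))\<^sup>2 + \<omega> / (real n)\<^sup>2 * (\<Sum>i<n. (norm (u i))\<^sup>2)"
    unfolding w_def .
qed

lemma L_smooth_expected_step:
  fixes F :: "real^'d \<Rightarrow> real" and G :: "'a \<Rightarrow> real^'d"
  assumes smooth: "L_smooth L F" and lower: "\<And>z. m \<le> F z"
    and G_int: "integrable M G" and unbiased: "(\<integral>s. G s \<partial>M) = gradient F x"
    and G_sq_int: "integrable M (\<lambda>s. (norm (G s))\<^sup>2)"
    and second_moment: "(\<integral>s. (norm (G s))\<^sup>2 \<partial>M) \<le> (norm (gradient F x))\<^sup>2 + \<sigma>"
    and "0 \<le> \<gamma>" and "L * \<gamma> \<le> 1"
  shows "integrable M (\<lambda>s. F (x - \<gamma> *\<^sub>R G s))"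
    and "(\<integral>s. F (x - \<gamma> *\<^sub>R G s) \<partial>M)
      \<le> F x - \<gamma> / 2 * (norm (gradient F x))\<^sup>2 + L * \<gamma>\<^sup>2 / 2 * \<sigma>"
proof -
  define U where "U s = F x - \<gamma> * (gradient F x \<bullet> G s) + L * \<gamma>\<^sup>2 / 2 * (norm (G s))\<^sup>2" for s
  have F_le_U: "F (x - \<gamma> *\<^sub>R G s) \<le> U s" for s
    using L_smooth_descent[OF smooth, of "x - \<gamma> *\<^sub>R G s" x]
    by (simp add: U_def inner_commute[of "G s"] power_mult_distrib)
  have U_int: "integrable M U"
    unfolding U_def using G_int G_sq_int by auto
  have "(\<lambda>s. x - \<gamma> *\<^sub>R G s) \<in> borel_measurable M"
    using borel_measurable_integrable[OF G_int] by measurable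
  then have F_meas: "(\<lambda>s. F (x - \<gamma> *\<^sub>R G s)) \<in> borel_measurable M"
    using L_smooth_borel_measurable(1)[OF smooth] by (rule measurable_compose)
  have bound: "norm (F (x - \<gamma> *\<^sub>R G s)) \<le> norm (\<bar>U s\<bar> + \<bar>m\<bar>)" for s
    using F_le_U[of s] lower[of "x - \<gamma> *\<^sub>R G s"] by simp
  have "integrable M (\<lambda>s. \<bar>U s\<bar> + \<bar>m\<bar>)"
    using U_int by (intro Bochner_Integration.integrable_add integrable_abs integrable_const)
  from Bochner_Integration.integrable_bound[OF this F_meas AE_I2[OF bound]]
  show F_int: "integrable M (\<lambda>s. F (x - \<gamma> *\<^sub>R G s))" .
  have "L \<ge> 0"
    using L_smooth_nonneg[OF smooth] .
  have "(\<integral>s. F (x - \<gamma> *\<^sub>R G s) \<partial>M) \<le> (\<integral>s. U s \<partial>M)"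
    using F_int U_int F_le_U by (rule integral_mono)
  also have "\<dots> = F x - \<gamma> * (gradient F x \<bullet> (\<integral>s. G s \<partial>M))
      + L * \<gamma>\<^sup>2 / 2 * (\<integral>s. (norm (G s))\<^sup>2 \<partial>M)"
    unfolding U_def using G_int G_sq_int
    by (simp add: Bochner_Integration.integral_add Bochner_Integration.integral_diff prob_space)
  also have "\<dots> = F x - \<gamma> * (norm (gradient F x))\<^sup>2 + L * \<gamma>\<^sup>2 / 2 * (\<integral>s. (norm (G s))\<^sup>2 \<partial>M)"
    by (simp add: unbiased dot_square_norm)
  also have "\<dots> \<le> F x - \<gamma> * (norm (gradient F x))\<^sup>2 + L * \<gamma>\<^sup>2 / 2 * ((norm (gradient F x))\<^sup>2 + \<sigma>)"
    using second_moment \<open>L \<ge> 0\<close> by (intro add_left_mono mult_left_mono) auto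
  also have "\<dots> \<le> F x - \<gamma> / 2 * (norm (gradient F x))\<^sup>2 + L * \<gamma>\<^sup>2 / 2 * \<sigma>"
  proof -
    have "L * \<gamma>\<^sup>2 \<le> \<gamma>"
      using \<open>L * \<gamma> \<le> 1\<close> \<open>0 \<le> \<gamma>\<close> mult_right_mono[of "L * \<gamma>" 1 \<gamma>]
      by (simp add: power2_eq_square mult.assoc)
    then have "L * \<gamma>\<^sup>2 / 2 * (norm (gradient F x))\<^sup>2 \<le> \<gamma> / 2 * (norm (gradient F x))\<^sup>2"
      by (simp add: mult_right_mono)
    then show ?thesis
      by (simp add: distrib_left)
  qed
  finally show "(\<integral>s. F (x - \<gamma> *\<^sub>R G s) \<partial>M)
      \<le> F x - \<gamma> / 2 * (norm (gradient F x))\<^sup>2 + L * \<gamma>\<^sup>2 / 2 * \<sigma>" .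
qed

lemma nn_integral_indep_var:
  assumes indep: "indep_var N X K Y" and h: "h \<in> borel_measurable (N \<Otimes>\<^sub>M K)"
  shows "(\<integral>\<^sup>+s. h (X s, Y s) \<partial>M) = (\<integral>\<^sup>+s. (\<integral>\<^sup>+s'. h (X s, Y s') \<partial>M) \<partial>M)"
proof -
  have X: "X \<in> measurable M N" and Y: "Y \<in> measurable M K"
    using indep_var_rv1[OF indep] indep_var_rv2[OF indep] by auto
  interpret PY: prob_space "distr M K Y"
    using Y by (rule prob_space_distr)
  have sets_eq: "sets (distr M N X \<Otimes>\<^sub>M distr M K Y) = sets (N \<Otimes>\<^sub>M K)"
    by (intro sets_pair_measure_cong sets_distr)
  have h': "h \<in> borel_measurable (N \<Otimes>\<^sub>M distr M K Y)"
    using h by (simp cong: measurable_cong_sets)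
  have inner: "(\<integral>\<^sup>+y. h (x, y) \<partial>distr M K Y) = (\<integral>\<^sup>+s'. h (x, Y s') \<partial>M)" if "x \<in> space N" for x
    using measurable_Pair2[OF h that] Y by (simp add: nn_integral_distr)
  have "(\<integral>\<^sup>+s. h (X s, Y s) \<partial>M) = integral\<^sup>N (distr M (N \<Otimes>\<^sub>M K) (\<lambda>s. (X s, Y s))) h"
    using X Y h by (simp add: nn_integral_distr)
  also have "\<dots> = integral\<^sup>N (distr M N X \<Otimes>\<^sub>M distr M K Y) h"
    using indep by (simp add: indep_var_distribution_eq)
  also have "\<dots> = (\<integral>\<^sup>+x. (\<integral>\<^sup>+y. h (x, y) \<partial>distr M K Y) \<partial>distr M N X)"
    using h sets_eq by (simp add: PY.nn_integral_fst cong: measurable_cong_sets)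
  also have "\<dots> = (\<integral>\<^sup>+s. (\<integral>\<^sup>+y. h (X s, y) \<partial>distr M K Y) \<partial>M)"
    using X PY.borel_measurable_nn_integral_fst[OF h'] by (simp add: nn_integral_distr)
  also have "\<dots> = (\<integral>\<^sup>+s. (\<integral>\<^sup>+s'. h (X s, Y s') \<partial>M) \<partial>M)"
    using X inner by (intro nn_integral_cong) (simp add: measurable_space)
  finally show ?thesis .
qed

end

locale dcgd_setting =
  fixes n :: nat and f :: "nat \<Rightarrow> real^'d \<Rightarrow> real" and L :: "nat \<Rightarrow> real"
    and xs :: "nat \<Rightarrow> real^'d" and \<alpha> \<omega> \<gamma>0 :: real
    and M :: "'a measure" and S :: "'b measure"
    and \<xi> :: "nat \<Rightarrow> nat \<Rightarrow> 'a \<Rightarrow> 'b" and Q :: "nat \<Rightarrow> nat \<Rightarrow> 'b \<Rightarrow> real^'d \<Rightarrow> real^'d"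
    and x0 :: "real^'d"
  assumes n_pos: "n \<ge> 1"
    and smooth: "\<forall>i<n. L_smooth (L i) (f i)"
    and min_exists: "\<forall>i<n. \<exists>z. \<forall>y. f i z \<le> f i y"
    and alpha_pos: "0 < \<alpha>"
    and omega: "\<omega> \<ge> 0"
    and M_prob: "prob_space M"
    and indep: "prob_space.indep_vars M (\<lambda>_. S) (\<lambda>(i, t). \<xi> i t) ({..<n} \<times> UNIV)"
    and Q_meas: "\<forall>i<n. \<forall>t. (\<lambda>(b, x). Q i t b x) \<in> borel_measurable (S \<Otimes>\<^sub>M borel)"
    and compress: "\<forall>i<n. \<forall>t. in_B M \<omega> (\<lambda>s. Q i t (\<xi> i t s))"
    and gamma0: "0 < \<gamma>0"
    and stepsize: "\<gamma>0 * ((1 / real n) * (\<Sum>i<n. L i)) \<le> 1"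
begin

sublocale prob_space M
  by (rule M_prob)

definition "\<gamma> = \<gamma>0 / \<alpha>\<^sup>2"
definition "Lbar = (1 / real n) * (\<Sum>i<n. L i)"
definition "Lmax = Max (L ` {..<n})"
definition "f_star = (1 / real n) * (\<Sum>i<n. INF y. f i y)"
definition "F = ftilde n f xs \<alpha>"
definition "\<kappa> = Lbar * \<gamma>0\<^sup>2 * \<omega> * Lmax / real n"

definition local_grad :: "nat \<Rightarrow> real^'d \<Rightarrow> real^'d" where
  "local_grad i x = \<alpha> *\<^sub>R gradient (f i) (Tmap \<alpha> (xs i) x)"

text \<open>Gradient estimates and iterates take the whole seed family \<open>y\<close>, indexed by (worker, round),
  as an argument; the random iterate \<open>x_t\<close> is \<open>iterate t (seed s)\<close>.\<close>
definition grad_est :: "nat \<Rightarrow> real^'d \<Rightarrow> (nat \<times> nat \<Rightarrow> 'b) \<Rightarrow> real^'d" where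
  "grad_est t x y = (1 / real n) *\<^sub>R (\<Sum>i<n. Q i t (y (i, t)) (local_grad i x))"

primrec iterate :: "nat \<Rightarrow> (nat \<times> nat \<Rightarrow> 'b) \<Rightarrow> real^'d" where
  "iterate 0 y = x0"
| "iterate (Suc t) y = iterate t y - \<gamma> *\<^sub>R grad_est t (iterate t y) y"

definition seed :: "'a \<Rightarrow> nat \<times> nat \<Rightarrow> 'b" where
  "seed s = (\<lambda>(i, t). \<xi> i t s)"

definition gap :: "nat \<Rightarrow> real" where
  "gap t = (\<integral>s. F (iterate t (seed s)) \<partial>M) - f_star"

definition grad_sq :: "nat \<Rightarrow> real" where
  "grad_sq t = (\<integral>s. (norm (gradient F (iterate t (seed s))))\<^sup>2 \<partial>M)"

lemma dcgd_eq_iterate: "dcgd n f xs \<alpha> \<gamma> Q \<xi> x0 t s = iterate t (seed s)"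
  by (induction t) (simp_all add: grad_est_def local_grad_def seed_def)

lemma grad_est_cong:
  "(\<And>i. i < n \<Longrightarrow> y (i, t) = y' (i, t)) \<Longrightarrow> grad_est t x y = grad_est t x y'"
  unfolding grad_est_def by simp

lemma iterate_cong:
  "(\<And>i u. i < n \<Longrightarrow> u < t \<Longrightarrow> y (i, u) = y' (i, u)) \<Longrightarrow> iterate t y = iterate t y'"
proof (induction t)
  case (Suc t)
  then have "iterate t y = iterate t y'"
    by simp
  moreover have "grad_est t x y = grad_est t x y'" for x
    using Suc.prems by (intro grad_est_cong) simp
  ultimately show ?case
    by simp
qed simp

lemma Lbar_nonneg: "Lbar \<ge> 0"
  unfolding Lbar_def using smooth
  by (intro mult_nonneg_nonneg sum_nonneg) (auto intro: L_smooth_nonneg)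

lemma L_le_Lmax: "i < n \<Longrightarrow> L i \<le> Lmax"
  unfolding Lmax_def by (intro Max_ge) auto

lemma kappa_nonneg: "\<kappa> \<ge> 0"
proof -
  have "Lmax \<ge> 0"
    using L_le_Lmax[of 0] smooth L_smooth_nonneg n_pos by fastforce
  then show ?thesis
    unfolding \<kappa>_def using Lbar_nonneg omega by simp
qed

lemma gamma_pos: "\<gamma> > 0"
  unfolding \<gamma>_def using gamma0 alpha_pos by simp

lemma L_smooth_F: "L_smooth (\<alpha>\<^sup>2 * Lbar) F"
  unfolding F_def Lbar_def using L_smooth_ftilde[OF smooth] alpha_pos by simp

lemma stepsize_F: "\<alpha>\<^sup>2 * Lbar * \<gamma> \<le> 1"
  using stepsize alpha_pos unfolding \<gamma>_def Lbar_def by (simp add: mult.commute)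

lemma gradient_F: "gradient F x = (1 / real n) *\<^sub>R (\<Sum>i<n. local_grad i x)"
  unfolding F_def local_grad_def using gradient_ftilde[OF smooth] by simp

lemma INF_f_le: "i < n \<Longrightarrow> (INF y. f i y) \<le> f i z"
  using min_exists by (intro cINF_lower) (auto simp: bdd_below_def)

lemma f_star_le_F: "f_star \<le> F x"
proof -
  have "(\<Sum>i<n. INF y. f i y) \<le> (\<Sum>i<n. f i (Tmap \<alpha> (xs i) x))"
    using INF_f_le by (intro sum_mono) auto
  then show ?thesis
    unfolding f_star_def F_def ftilde_def by (intro mult_left_mono) auto
qed

lemma sum_norm_local_grad_le:
  "(\<Sum>i<n. (norm (local_grad i x))\<^sup>2) \<le> 2 * \<alpha>\<^sup>2 * Lmax * real n * (F x - f_star)"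
proof -
  let ?gap = "\<lambda>i. f i (Tmap \<alpha> (xs i) x) - (INF y. f i y)"
  have "(norm (local_grad i x))\<^sup>2 \<le> 2 * \<alpha>\<^sup>2 * Lmax * ?gap i" if "i < n" for i
  proof -
    have "(norm (gradient (f i) (Tmap \<alpha> (xs i) x)))\<^sup>2 \<le> 2 * L i * ?gap i"
      using smooth that INF_f_le[OF that] by (intro L_smooth_norm_gradient_le) auto
    also have "\<dots> \<le> 2 * Lmax * ?gap i"
      using L_le_Lmax[OF that] INF_f_le[OF that] by (intro mult_right_mono) auto
    finally show ?thesis
      unfolding local_grad_def using alpha_pos
      by (simp add: power_mult_distrib mult_left_mono mult.assoc)
  qed
  then have "(\<Sum>i<n. (norm (local_grad i x))\<^sup>2) \<le> (\<Sum>i<n. 2 * \<alpha>\<^sup>2 * Lmax * ?gap i)"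
    by (intro sum_mono) auto
  also have "\<dots> = 2 * \<alpha>\<^sup>2 * Lmax * real n * (F x - f_star)"
    using n_pos unfolding F_def ftilde_def f_star_def
    by (simp add: sum_distrib_left[symmetric] sum_subtractf right_diff_distrib)
  finally show ?thesis .
qed

lemma seed_family: "(\<lambda>j. (\<lambda>(i, t). \<xi> i t) j s) = seed s"
  by (auto simp: seed_def fun_eq_iff)

lemma indep_compressed_pair:
  assumes "i < n" "j < n" "i \<noteq> j"
  shows "indep_var borel (\<lambda>s. Q i t (\<xi> i t s) u) borel (\<lambda>s. Q j t (\<xi> j t s) u')"
proof -
  have seeds_indep: "indep_var (PiM {(i, t)} (\<lambda>_. S)) (\<lambda>s. restrict (seed s) {(i, t)})
      (PiM {(j, t)} (\<lambda>_. S)) (\<lambda>s. restrict (seed s) {(j, t)})"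
    using indep_var_restrict[OF indep, of "{(i, t)}" "{(j, t)}"] assms
    unfolding seed_family by auto
  have "(\<lambda>\<omega>. Q k t (\<omega> (k, t)) v) \<in> borel_measurable (PiM {(k, t)} (\<lambda>_. S))" if "k < n" for k v
  proof -
    have pair: "(\<lambda>\<omega>. (\<omega> (k, t), v)) \<in> measurable (PiM {(k, t)} (\<lambda>_. S)) (S \<Otimes>\<^sub>M borel)"
      by (intro measurable_Pair measurable_component_singleton) auto
    have "(\<lambda>(b, x). Q k t b x) \<in> borel_measurable (S \<Otimes>\<^sub>M borel)"
      using Q_meas that by blast
    from measurable_compose[OF pair this] show ?thesis
      by simp
  qed
  from indep_var_compose[OF seeds_indep this[OF \<open>i < n\<close>] this[OF \<open>j < n\<close>]]
  show ?thesis
    by (simp add: o_def seed_def)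
qed

lemma expected_step:
  shows "integrable M (\<lambda>s. F (x - \<gamma> *\<^sub>R grad_est t x (seed s)))"
    and "(\<integral>s. F (x - \<gamma> *\<^sub>R grad_est t x (seed s)) \<partial>M) - f_star
      \<le> (1 + \<kappa>) * (F x - f_star) - \<gamma> / 2 * (norm (gradient F x))\<^sup>2"
proof -
  have est: "grad_est t x (seed s) = (1 / real n) *\<^sub>R (\<Sum>i<n. Q i t (\<xi> i t s) (local_grad i x))" for s
    unfolding grad_est_def seed_def by simp
  have "\<And>i. i < n \<Longrightarrow> in_B M \<omega> (\<lambda>s. Q i t (\<xi> i t s))"
    using compress by blast
  note avg = in_B_average[where n=n and \<omega>=\<omega> and C="\<lambda>i s. Q i t (\<xi> i t s)"
      and u="\<lambda>i. local_grad i x",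
      OF this indep_compressed_pair, folded est gradient_F]
  define \<sigma> where "\<sigma> = \<omega> / (real n)\<^sup>2 * (\<Sum>i<n. (norm (local_grad i x))\<^sup>2)"
  have step: "integrable M (\<lambda>s. F (x - \<gamma> *\<^sub>R grad_est t x (seed s)))"
    "(\<integral>s. F (x - \<gamma> *\<^sub>R grad_est t x (seed s)) \<partial>M)
      \<le> F x - \<gamma> / 2 * (norm (gradient F x))\<^sup>2 + \<alpha>\<^sup>2 * Lbar * \<gamma>\<^sup>2 / 2 * \<sigma>"
    using L_smooth_expected_step[OF L_smooth_F f_star_le_F avg(1-3) avg(4)[folded \<sigma>_def] _ stepsize_F]
      gamma_pos by auto
  show "integrable M (\<lambda>s. F (x - \<gamma> *\<^sub>R grad_est t x (seed s)))"
    by (rule step(1))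
  \<comment> \<open>the variance of the compressors costs a factor \<open>1 + \<kappa>\<close> on the gap\<close>
  have "\<alpha>\<^sup>2 * Lbar * \<gamma>\<^sup>2 / 2 * \<sigma>
      \<le> \<alpha>\<^sup>2 * Lbar * \<gamma>\<^sup>2 / 2 * (\<omega> / (real n)\<^sup>2 * (2 * \<alpha>\<^sup>2 * Lmax * real n * (F x - f_star)))"
    unfolding \<sigma>_def using sum_norm_local_grad_le Lbar_nonneg omega
    by (intro mult_left_mono) auto
  also have "\<dots> = \<kappa> * (F x - f_star)"
    using alpha_pos n_pos unfolding \<kappa>_def \<gamma>_def by (simp add: field_simps power2_eq_square)
  finally show "(\<integral>s. F (x - \<gamma> *\<^sub>R grad_est t x (seed s)) \<partial>M) - f_star
      \<le> (1 + \<kappa>) * (F x - f_star) - \<gamma> / 2 * (norm (gradient F x))\<^sup>2"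
    using step(2) by (simp add: algebra_simps)
qed

lemma local_grad_measurable[measurable]:
  assumes "i < n"
  shows "local_grad i \<in> borel_measurable borel"
proof -
  have [measurable]: "gradient (f i) \<in> borel_measurable borel"
    using smooth assms L_smooth_borel_measurable(2) by blast
  show ?thesis
    unfolding local_grad_def Tmap_def by measurable
qed

lemma grad_est_measurable:
  assumes X: "X \<in> borel_measurable N" and Y: "Y \<in> measurable N (PiM B (\<lambda>_. S))"
    and B: "\<And>i. i < n \<Longrightarrow> (i, t) \<in> B"
  shows "(\<lambda>w. grad_est t (X w) (Y w)) \<in> borel_measurable N"
proof -
  have "(\<lambda>w. Q i t (Y w (i, t)) (local_grad i (X w))) \<in> borel_measurable N" if "i < n" for i
  proof -
    have "(\<lambda>w. Y w (i, t)) \<in> measurable N S"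
      using measurable_compose[OF Y measurable_component_singleton[OF B[OF that]]] .
    moreover have "(\<lambda>w. local_grad i (X w)) \<in> borel_measurable N"
      using X that by measurable
    ultimately have "(\<lambda>w. (Y w (i, t), local_grad i (X w))) \<in> measurable N (S \<Otimes>\<^sub>M borel)"
      by (rule measurable_Pair)
    moreover have "(\<lambda>(b, x). Q i t b x) \<in> borel_measurable (S \<Otimes>\<^sub>M borel)"
      using Q_meas that by blast
    ultimately show ?thesis
      using measurable_compose by fastforce
  qed
  then show ?thesis
    unfolding grad_est_def by (intro borel_measurable_scaleR borel_measurable_sum) auto
qed

lemma iterate_measurable:
  "{..<n} \<times> {..<t} \<subseteq> B \<Longrightarrow> iterate t \<in> borel_measurable (PiM B (\<lambda>_. S))"
proof (induction t)
  case 0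
  have "iterate 0 = (\<lambda>_. x0)"
    by (simp add: fun_eq_iff)
  then show ?case
    by simp
next
  case (Suc t)
  have "{..<n} \<times> {..<t} \<subseteq> B"
    using Suc.prems by auto
  with Suc.IH have iterate_t: "iterate t \<in> borel_measurable (PiM B (\<lambda>_. S))" .
  have "(i, t) \<in> B" if "i < n" for i
    using Suc.prems that by auto
  from grad_est_measurable[OF iterate_t measurable_ident_sets[OF refl] this]
  have "(\<lambda>y. grad_est t (iterate t y) y) \<in> borel_measurable (PiM B (\<lambda>_. S))" .
  with iterate_t
  show ?case
    by simp
qed

lemma integrable_norm_gradient_F:
  assumes "X \<in> borel_measurable M" and "integrable M (\<lambda>s. F (X s))"
  shows "integrable M (\<lambda>s. (norm (gradient F (X s)))\<^sup>2)"
proof (rule Bochner_Integration.integrable_bound)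
  show "integrable M (\<lambda>s. 2 * (\<alpha>\<^sup>2 * Lbar) * (F (X s) - f_star))"
    using assms(2) by auto
  show "(\<lambda>s. (norm (gradient F (X s)))\<^sup>2) \<in> borel_measurable M"
    using assms(1) L_smooth_borel_measurable(2)[OF L_smooth_F] by measurable
  show "AE s in M. norm ((norm (gradient F (X s)))\<^sup>2) \<le> norm (2 * (\<alpha>\<^sup>2 * Lbar) * (F (X s) - f_star))"
    using L_smooth_norm_gradient_le[OF L_smooth_F f_star_le_F] f_star_le_F Lbar_nonneg
    by (intro AE_I2) simp
qed


definition gap_bound :: "real^'d \<Rightarrow> real" where
  "gap_bound x = (1 + \<kappa>) * (F x - f_star) - \<gamma> / 2 * (norm (gradient F x))\<^sup>2"

lemma gap_bound_nonneg: "0 \<le> gap_bound x"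
proof -
  have "f_star \<le> (\<integral>s. F (x - \<gamma> *\<^sub>R grad_est 0 x (seed s)) \<partial>M)"
    using expected_step(1) f_star_le_F by (intro integral_ge_const) auto
  then show ?thesis
    using expected_step(2)[of x 0] unfolding gap_bound_def by linarith
qed

lemma nn_integral_step_le:
  "(\<integral>\<^sup>+s. ennreal (F (x - \<gamma> *\<^sub>R grad_est t x (seed s)) - f_star) \<partial>M) \<le> gap_bound x"
proof -
  have "(\<integral>\<^sup>+s. ennreal (F (x - \<gamma> *\<^sub>R grad_est t x (seed s)) - f_star) \<partial>M)
      = (\<integral>s. F (x - \<gamma> *\<^sub>R grad_est t x (seed s)) - f_star \<partial>M)"
    using expected_step(1) f_star_le_F by (intro nn_integral_eq_integral) auto
  also have "\<dots> \<le> gap_bound x"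
    using expected_step[of x t] unfolding gap_bound_def by (auto simp: prob_space intro!: ennreal_leI)
  finally show ?thesis .
qed

lemma iterate_seed_measurable: "(\<lambda>s. iterate t (seed s)) \<in> borel_measurable M"
proof -
  let ?I = "{..<n} \<times> (UNIV :: nat set)"
  have "(\<lambda>s. restrict (seed s) ?I) \<in> measurable M (PiM ?I (\<lambda>_. S))"
    using indep unfolding indep_vars_def seed_def by (auto intro!: measurable_restrict)
  moreover have "iterate t \<in> borel_measurable (PiM ?I (\<lambda>_. S))"
    by (rule iterate_measurable) auto
  ultimately have "(\<lambda>s. iterate t (restrict (seed s) ?I)) \<in> borel_measurable M"
    by (rule measurable_compose)
  moreover have "iterate t (restrict (seed s) ?I) = iterate t (seed s)" for s
    by (rule iterate_cong) auto
  ultimately show ?thesis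
    by simp
qed

text \<open>The iterate \<open>x_t\<close> depends only on the seeds of rounds before \<open>t\<close>, which are independent
  of those of round \<open>t\<close>; so the expectation over round \<open>t\<close> can be taken with \<open>x_t\<close> frozen.\<close>
lemma nn_integral_gap_Suc_le:
  "(\<integral>\<^sup>+s. ennreal (F (iterate (Suc t) (seed s)) - f_star) \<partial>M)
    \<le> (\<integral>\<^sup>+s. ennreal (gap_bound (iterate t (seed s))) \<partial>M)"
proof -
  define past where "past = {..<n} \<times> {..<t}"
  define now where "now = {..<n} \<times> {t}"
  define Z where "Z s = restrict (seed s) past" for s
  define Y where "Y s = restrict (seed s) now" for s
  define next_iter where "next_iter z y = iterate t z - \<gamma> *\<^sub>R grad_est t (iterate t z) y" for z y
  have indep_ZY: "indep_var (PiM past (\<lambda>_. S)) Z (PiM now (\<lambda>_. S)) Y"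
    using indep_var_restrict[OF indep, of past now] unfolding seed_family Z_def Y_def
    by (auto simp: past_def now_def)
  have iterate_past: "iterate t (seed s) = iterate t (Z s)" for s
    unfolding Z_def past_def by (rule iterate_cong) auto
  have grad_est_now: "grad_est t x (Y s) = grad_est t x (seed s)" for x s
    unfolding Y_def now_def by (rule grad_est_cong) auto
  have "iterate t \<in> borel_measurable (PiM past (\<lambda>_. S))"
    unfolding past_def by (rule iterate_measurable) simp
  then have iterate_fst: "(\<lambda>w. iterate t (fst w)) \<in> borel_measurable (PiM past (\<lambda>_. S) \<Otimes>\<^sub>M PiM now (\<lambda>_. S))"
    by (rule measurable_compose[OF measurable_fst])
  then have "(\<lambda>w. grad_est t (iterate t (fst w)) (snd w))
      \<in> borel_measurable (PiM past (\<lambda>_. S) \<Otimes>\<^sub>M PiM now (\<lambda>_. S))"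
    by (rule grad_est_measurable[OF _ measurable_snd]) (simp add: now_def)
  with iterate_fst have next_meas: "(\<lambda>w. ennreal (F (next_iter (fst w) (snd w)) - f_star))
      \<in> borel_measurable (PiM past (\<lambda>_. S) \<Otimes>\<^sub>M PiM now (\<lambda>_. S))"
    unfolding next_iter_def using L_smooth_borel_measurable(1)[OF L_smooth_F] by measurable
  have "(\<integral>\<^sup>+s. ennreal (F (iterate (Suc t) (seed s)) - f_star) \<partial>M)
      = (\<integral>\<^sup>+s. ennreal (F (next_iter (Z s) (Y s)) - f_star) \<partial>M)"
    by (simp add: next_iter_def grad_est_now iterate_past[symmetric])
  also have "\<dots> = (\<integral>\<^sup>+s. (\<integral>\<^sup>+s'. ennreal (F (next_iter (Z s) (Y s')) - f_star) \<partial>M) \<partial>M)"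
    using nn_integral_indep_var[OF indep_ZY next_meas] by simp
  also have "\<dots> = (\<integral>\<^sup>+s. (\<integral>\<^sup>+s'. ennreal (F (iterate t (seed s)
      - \<gamma> *\<^sub>R grad_est t (iterate t (seed s)) (seed s')) - f_star) \<partial>M) \<partial>M)"
    by (simp add: next_iter_def grad_est_now iterate_past)
  also have "\<dots> \<le> (\<integral>\<^sup>+s. ennreal (gap_bound (iterate t (seed s))) \<partial>M)"
    by (intro nn_integral_mono nn_integral_step_le)
  finally show ?thesis .
qed

lemma expected_gap_step:
  assumes int_t: "integrable M (\<lambda>s. F (iterate t (seed s)))"
  shows "integrable M (\<lambda>s. F (iterate (Suc t) (seed s)))"
    and "gap (Suc t) \<le> (1 + \<kappa>) * gap t - \<gamma> / 2 * grad_sq t"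
proof -
  have int_grad: "integrable M (\<lambda>s. (norm (gradient F (iterate t (seed s))))\<^sup>2)"
    using integrable_norm_gradient_F[OF iterate_seed_measurable int_t] .
  have bound_int: "integrable M (\<lambda>s. gap_bound (iterate t (seed s)))"
    unfolding gap_bound_def using int_t int_grad by auto
  have Suc_meas: "(\<lambda>s. F (iterate (Suc t) (seed s)) - f_star) \<in> borel_measurable M"
    using measurable_compose[OF iterate_seed_measurable L_smooth_borel_measurable(1)[OF L_smooth_F]]
    by (simp del: iterate.simps)
  have "0 \<le> F (iterate (Suc t) (seed s)) - f_star" for s
    using f_star_le_F by simp
  note gap_Suc = nn_integral_le_imp_integral_le[OF Suc_meas this bound_int gap_bound_nonneg
      nn_integral_gap_Suc_le]
  from Bochner_Integration.integrable_add[OF gap_Suc(1) integrable_const[of f_star]]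
  show Suc_int: "integrable M (\<lambda>s. F (iterate (Suc t) (seed s)))"
    by simp
  have "gap (Suc t) = (\<integral>s. F (iterate (Suc t) (seed s)) - f_star \<partial>M)"
    unfolding gap_def using Suc_int by (simp add: prob_space del: iterate.simps)
  also have "\<dots> \<le> (\<integral>s. gap_bound (iterate t (seed s)) \<partial>M)"
    by (rule gap_Suc(2))
  also have "\<dots> = (1 + \<kappa>) * gap t - \<gamma> / 2 * grad_sq t"
    using int_t int_grad unfolding gap_def grad_sq_def gap_bound_def by (simp add: prob_space algebra_simps)
  finally show "gap (Suc t) \<le> (1 + \<kappa>) * gap t - \<gamma> / 2 * grad_sq t" .
qed

lemma gap_0: "gap 0 = F x0 - f_star"
  unfolding gap_def by (simp add: prob_space)

lemma integrable_F_iterate: "integrable M (\<lambda>s. F (iterate t (seed s)))"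
proof (induction t)
  case (Suc t)
  from expected_gap_step(1)[OF this] show ?case .
qed simp

text \<open>The argument yields the growth factor \<open>1 + \<kappa>\<close> per round; the stated bound uses the weaker
  factor \<open>1 + 2 \<kappa>\<close>.\<close>
lemma Min_grad_sq_le:
  assumes "k \<ge> 1"
  shows "(MIN t\<in>{0..k-1}. grad_sq t) \<le> 2 * (1 + 2 * \<kappa>) ^ k * gap 0 / (\<gamma> * real k)"
proof (rule Min_le_of_descent_recurrence[OF _ gamma_pos assms])
  show gap_nonneg: "gap t \<ge> 0" for t
    unfolding gap_def using integrable_F_iterate f_star_le_F
    by (simp add: integral_ge_const)
  show "grad_sq t \<ge> 0" for t
    unfolding grad_sq_def by simp
  show "gap (Suc t) \<le> (1 + 2 * \<kappa>) * gap t - \<gamma> / 2 * grad_sq t" for t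
    using expected_gap_step(2)[OF integrable_F_iterate] gap_nonneg[of t] kappa_nonneg
    by (smt (verit) mult_right_mono)
qed (use kappa_nonneg in simp)

end

theorem corollary5:
  fixes n :: nat
    and f :: "nat \<Rightarrow> real^'d \<Rightarrow> real"
    and L :: "nat \<Rightarrow> real"
    and xs :: "nat \<Rightarrow> real^'d"
    and \<alpha> \<omega> \<gamma>0 :: real
    and M :: "'a measure"
    and S :: "'b measure"
    and \<xi> :: "nat \<Rightarrow> nat \<Rightarrow> 'a \<Rightarrow> 'b"
    and Q :: "nat \<Rightarrow> nat \<Rightarrow> 'b \<Rightarrow> real^'d \<Rightarrow> real^'d"
    and x0 :: "real^'d"
    and k :: nat
  assumes n_pos: "n \<ge> 1"
    and smooth: "\<forall>i<n. L_smooth (L i) (f i)"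
    and min_exists: "\<forall>i<n. \<exists>z. \<forall>y. f i z \<le> f i y"
    and stationary: "\<forall>i<n. gradient (f i) (xs i) = 0"
    and alpha: "0 < \<alpha>" "\<alpha> < 1"
    and omega: "\<omega> \<ge> 0"
    and M_prob: "prob_space M"
    and indep: "prob_space.indep_vars M (\<lambda>_. S) (\<lambda>(i, t). \<xi> i t) ({..<n} \<times> UNIV)"
    and Q_meas: "\<forall>i<n. \<forall>t. (\<lambda>(b, x). Q i t b x) \<in> borel_measurable (S \<Otimes>\<^sub>M borel)"
    and compress: "\<forall>i<n. \<forall>t. in_B M \<omega> (\<lambda>s. Q i t (\<xi> i t s))"
    and gamma0: "0 < \<gamma>0"
    and stepsize: "(\<gamma>0 / \<alpha>\<^sup>2) * ((1 / real n) * (\<Sum>i<n. L i)) * \<alpha>\<^sup>2 \<le> 1"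
    and Delta_fin: "bdd_above ((\<lambda>a. ftilde n f xs a x0 - (1 / real n) * (\<Sum>i<n. INF y. f i y)) ` {0<..<1})"
    and k_pos: "k \<ge> 1"
  shows "(MIN t\<in>{0..k-1}. integral\<^sup>L M (\<lambda>s. (norm (gradient (ftilde n f xs \<alpha>)
              (dcgd n f xs \<alpha> (\<gamma>0 / \<alpha>\<^sup>2) Q \<xi> x0 t s)))\<^sup>2))
         \<le> \<alpha>\<^sup>2 * (2 * (1 + 2 * ((1 / real n) * (\<Sum>i<n. L i)) * \<omega> * \<gamma>0\<^sup>2 * Max (L ` {..<n}) / real n) ^ k
              / (\<gamma>0 * real k))
           * (SUP a\<in>{0<..<1}. ftilde n f xs a x0 - (1 / real n) * (\<Sum>i<n. INF y. f i y))"
proof -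
  have "\<gamma>0 * ((1 / real n) * (\<Sum>i<n. L i)) \<le> 1"
    using stepsize alpha by simp
  with n_pos smooth min_exists alpha(1) omega M_prob indep Q_meas compress gamma0
  interpret dcgd_setting n f L xs \<alpha> \<omega> \<gamma>0 M S \<xi> Q x0
    by (rule dcgd_setting.intro)
  have gap_le: "gap 0 \<le> (SUP a\<in>{0<..<1}. ftilde n f xs a x0 - (1 / real n) * (\<Sum>i<n. INF y. f i y))"
    unfolding gap_0 F_def f_star_def using alpha Delta_fin by (intro cSUP_upper) auto
  have rate: "1 + 2 * \<kappa> = 1 + 2 * ((1 / real n) * (\<Sum>i<n. L i)) * \<omega> * \<gamma>0\<^sup>2 * Max (L ` {..<n}) / real n"
    unfolding \<kappa>_def Lbar_def Lmax_def by (simp add: algebra_simps)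
  have lhs: "integral\<^sup>L M (\<lambda>s. (norm (gradient (ftilde n f xs \<alpha>) (dcgd n f xs \<alpha> (\<gamma>0 / \<alpha>\<^sup>2) Q \<xi> x0 t s)))\<^sup>2)
      = grad_sq t" for t
    unfolding grad_sq_def F_def dcgd_eq_iterate[unfolded \<gamma>_def] ..
  have "(MIN t\<in>{0..k-1}. grad_sq t) \<le> 2 * (1 + 2 * \<kappa>) ^ k * gap 0 / (\<gamma> * real k)"
    using Min_grad_sq_le[OF k_pos] .
  also have "\<dots> = \<alpha>\<^sup>2 * (2 * (1 + 2 * \<kappa>) ^ k / (\<gamma>0 * real k)) * gap 0"
    unfolding \<gamma>_def using alpha by (simp add: field_simps)
  also have "\<dots> \<le> \<alpha>\<^sup>2 * (2 * (1 + 2 * \<kappa>) ^ k / (\<gamma>0 * real k))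
      * (SUP a\<in>{0<..<1}. ftilde n f xs a x0 - (1 / real n) * (\<Sum>i<n. INF y. f i y))"
    using gap_le kappa_nonneg gamma0 by (intro mult_left_mono) auto
  finally show ?thesis
    unfolding lhs rate .
qed

end
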